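(* Let $q$ be a prime power and $k\ge3$, $u\ge2$, $h\ge1$ integers. Let $U_1,\dots,U_h$ be $u$-dimensional subspaces of $\mathbf F_q^k$ with $U_i\cap U_j=\{0\}$ for $i\ne j$, and assume $q^k-q^{k-1}>h(q^u-1)$. Let $U$ be the set of nonzero vectors of $\mathbf F_q^k$ not in $U_1\cup\dots\cup U_h$, let $\widetilde G$ be a $k\times\frac{|U|}{q-1}$ matrix whose columns consist of exactly one representative of each class $\{\lambda\mathbf v:\lambda\in\mathbf F_q^*\}$, $\mathbf v\in U$, and let $\mathbf C$ be the linear code with generator matrix $\widetilde G$. Then $\mathbf C$ is a linear $\big[\frac{(q^k-1)-h(q^u-1)}{q-1},\,k,\,d\big]_q$ code with $d\ge q^{k-1}-hq^{u-1}$, and $\mathbf C$ has at most $h+1$ distinct nonzero weights. *)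

theory Defs
  imports "HOL-Analysis.Analysis"
begin

text \<open>The linear code generated by a k x N
matrix whose j-th column is the vector G j (for j < N): all row-combinations
x^T G, i.e. the words (x . G 0, ..., x . G (N-1)) for x in F_q^k.\<close>
definition gen_code :: "(nat \<Rightarrow> 'a::field ^ 'n) \<Rightarrow> nat \<Rightarrow> 'a list set" where
  "gen_code G N = (\<lambda>x. map (\<lambda>j. \<Sum>i\<in>UNIV. x $ i * G j $ i) [0..<N]) ` (UNIV :: ('a ^ 'n) set)"

definition hwt :: "'a::zero list \<Rightarrow> nat" where
  "hwt c = length (filter (\<lambda>a. a \<noteq> 0) c)"

end

theory Submission
  imports Defs
begin

text \<open>For a nonzero message x, the weight of its codeword counts the columns G j with
x \<bullet> G j \<noteq> 0. The columns represent the projective points of U, so (q - 1) times the weight is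
the number of v \<in> U with x \<bullet> v \<noteq> 0. A linear functional that does not vanish on a
d-dimensional subspace is nonzero at exactly (q - 1) q^(d-1) of its vectors. Splitting F_q^k into
U, the sets U_i - {0} and {0} therefore gives weight q^(k-1) - m q^(u-1), where m \<le> h is the
number of U_i not contained in the hyperplane orthogonal to x. The hypothesis on q^k - q^(k-1)
makes all these weights positive, so the encoding map is injective and the code has q^k words.\<close>

lemma two_le_card_field: "2 \<le> CARD('a::{field,finite})"
proof -
  have "card {0::'a, 1} \<le> CARD('a)" by (rule card_mono) auto
  then show ?thesis by simp
qed

lemma card_subspace:
  fixes S :: "('a::{field,finite} ^ 'n) set"
  assumes "vec.subspace S"
  shows "card S = CARD('a) ^ vec.dim S"
proof -
  obtain B where B: "B \<subseteq> S" "vec.independent B" "S \<subseteq> vec.span B" "card B = vec.dim S"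
    using vec.basis_exists by blast
  define comb where "comb c = (\<Sum>v\<in>B. c v *s v)" for c :: "'a ^ 'n \<Rightarrow> 'a"
  let ?C = "PiE B (\<lambda>_. UNIV :: 'a set)"
  have "S = vec.span B"
    using B assms vec.span_minimal by blast
  also have "\<dots> = range comb"
    unfolding comb_def by (rule vec.span_finite) simp
  also have "\<dots> = comb ` ?C"
  proof (intro equalityI subsetI)
    fix y assume "y \<in> range comb"
    then obtain c where "y = comb c" by blast
    also have "comb c = comb (restrict c B)"
      unfolding comb_def by (intro sum.cong) auto
    finally show "y \<in> comb ` ?C" by auto
  qed auto
  finally have S_eq: "S = comb ` ?C" .
  have "inj_on comb ?C"
  proof (rule inj_onI)
    fix c d assume c: "c \<in> ?C" and d: "d \<in> ?C" and "comb c = comb d"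
    then have "(\<Sum>v\<in>B. (c v - d v) *s v) = 0"
      unfolding comb_def by (simp add: vector_sub_rdistrib sum_subtractf)
    moreover have "\<forall>c. (\<Sum>v\<in>B. c v *s v) = 0 \<longrightarrow> (\<forall>v\<in>B. c v = 0)"
      using B(2) by (simp add: vec.independent_explicit)
    ultimately have "\<forall>v\<in>B. c v - d v = 0" by metis
    then show "c = d" using c d by (auto simp: PiE_iff extensional_def fun_eq_iff)
  qed
  then have "card S = card ?C"
    using S_eq card_image by blast
  also have "\<dots> = CARD('a) ^ vec.dim S"
    using B(4) by (simp add: card_PiE)
  finally show ?thesis .
qed

lemma card_subspace_eq_mult_card_kernel:
  fixes S :: "('a::{field,finite} ^ 'n) set" and f :: "'a ^ 'n \<Rightarrow> 'a"
  assumes f: "Vector_Spaces.linear (*s) (*) f" and S: "vec.subspace S"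
    and w: "w \<in> S" "f w \<noteq> 0"
  shows "card S = CARD('a) * card {v \<in> S. f v = 0}"
proof -
  interpret f: Vector_Spaces.linear "(*s)" "(*)" f by (fact f)
  define e where "e = inverse (f w) *s w"
  have e: "e \<in> S" "f e = 1"
    using S w unfolding e_def by (simp_all add: vec.subspace_scale f.scale)
  define K where "K = {v \<in> S. f v = 0}"
  have "bij_betw (\<lambda>(a, v). v + a *s e) (UNIV \<times> K) S"
  proof (rule bij_betw_byWitness[where f' = "\<lambda>s. (f s, s - f s *s e)"])
    show "(\<lambda>(a, v). v + a *s e) ` (UNIV \<times> K) \<subseteq> S"
      unfolding K_def using S e by (auto intro!: vec.subspace_add vec.subspace_scale)
    show "(\<lambda>s. (f s, s - f s *s e)) ` S \<subseteq> UNIV \<times> K"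
      unfolding K_def using S e
      by (auto intro!: vec.subspace_diff vec.subspace_scale simp: f.diff f.scale)
  qed (auto simp: K_def f.add f.scale e)
  then have "card ((UNIV :: 'a set) \<times> K) = card S"
    by (simp add: bij_betw_same_card)
  then show ?thesis
    unfolding K_def by (simp add: card_cartesian_product)
qed

lemma card_nonvanishing_linear_functional:
  fixes S :: "('a::{field,finite} ^ 'n) set" and f :: "'a ^ 'n \<Rightarrow> 'a"
  assumes f: "Vector_Spaces.linear (*s) (*) f" and S: "vec.subspace S"
    and nonzero: "\<exists>w\<in>S. f w \<noteq> 0"
  shows "card {v \<in> S. f v \<noteq> 0} = (CARD('a) - 1) * CARD('a) ^ (vec.dim S - 1)"
proof -
  let ?q = "CARD('a)" and ?d = "vec.dim S" and ?K = "{v \<in> S. f v = 0}"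
  have q_pow: "?q ^ ?d = ?q * card ?K"
    using card_subspace[OF S] card_subspace_eq_mult_card_kernel[OF f S] nonzero by auto
  have "?d \<noteq> 0"
  proof
    assume "?d = 0"
    with q_pow have "?q * card ?K = 1" by simp
    then show False using two_le_card_field[where 'a='a] by simp
  qed
  then have "card ?K = ?q ^ (?d - 1)"
    using q_pow by (cases ?d) auto
  moreover have "{v \<in> S. f v \<noteq> 0} = S - ?K" by blast
  ultimately have "card {v \<in> S. f v \<noteq> 0} = ?q * ?q ^ (?d - 1) - ?q ^ (?d - 1)"
    using q_pow card_subspace[OF S] by (simp add: card_Diff_subset)
  then show ?thesis
    by (simp add: diff_mult_distrib)
qed

lemma card_filter_projective_representatives:
  fixes U :: "('a::{field,finite} ^ 'n) set" and G :: "nat \<Rightarrow> 'a ^ 'n"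
  assumes zero_notin: "0 \<notin> U"
    and scale_closed: "\<And>a v. a \<noteq> 0 \<Longrightarrow> v \<in> U \<Longrightarrow> a *s v \<in> U"
    and cols_in: "\<And>j. j < N \<Longrightarrow> G j \<in> U"
    and cols_rep: "\<And>v. v \<in> U \<Longrightarrow> \<exists>!j. j < N \<and> (\<exists>l. l \<noteq> 0 \<and> G j = l *s v)"
    and P_scale: "\<And>a v. a \<noteq> 0 \<Longrightarrow> P (a *s v) = P v"
  shows "card {v \<in> U. P v} = (CARD('a) - 1) * card {j. j < N \<and> P (G j)}"
proof -
  let ?J = "{j. j < N \<and> P (G j)}" and ?F = "UNIV - {0 :: 'a}"
  let ?g = "\<lambda>(l, j). l *s G j"
  have "inj_on ?g (?F \<times> ?J)"
  proof (rule inj_onI)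
    fix p p' assume "p \<in> ?F \<times> ?J" "p' \<in> ?F \<times> ?J" "?g p = ?g p'"
    moreover obtain l j l' j' where pp: "p = (l, j)" "p' = (l', j')" by fastforce
    ultimately have l: "l \<noteq> 0" "l' \<noteq> 0" and j: "j < N" "j' < N" and eq: "l *s G j = l' *s G j'"
      by auto
    have "G j' = (inverse l' * l) *s G j"
      using eq l by (metis vec.scale_scale vec.scale_one left_inverse)
    then have "j' < N \<and> (\<exists>m. m \<noteq> 0 \<and> G j' = m *s G j)"
      using j l by (intro conjI exI[of _ "inverse l' * l"]) auto
    moreover have "j < N \<and> (\<exists>m. m \<noteq> 0 \<and> G j = m *s G j)"
      using j by (intro conjI exI[of _ 1]) auto
    ultimately have "j = j'"
      using cols_rep[OF cols_in[OF j(1)]] by blast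
    moreover have "G j \<noteq> 0"
      using cols_in[OF j(1)] zero_notin by auto
    ultimately show "p = p'"
      using eq pp by (simp add: vec.scale_cancel_right)
  qed
  moreover have "?g ` (?F \<times> ?J) = {v \<in> U. P v}"
  proof (intro equalityI subsetI)
    fix v assume "v \<in> ?g ` (?F \<times> ?J)"
    then show "v \<in> {v \<in> U. P v}"
      using cols_in scale_closed P_scale by auto
  next
    fix v assume v: "v \<in> {v \<in> U. P v}"
    then obtain j m where jm: "j < N" "m \<noteq> 0" "G j = m *s v"
      using cols_rep by blast
    then have "v = ?g (inverse m, j)" and "P (G j)"
      using v P_scale by auto
    with jm show "v \<in> ?g ` (?F \<times> ?J)" by auto
  qed
  ultimately have "card {v \<in> U. P v} = card (?F \<times> ?J)"
    using card_image by fastforce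
  then show ?thesis
    by (simp add: card_cartesian_product card_Diff_singleton)
qed

lemma card_split_off_trivially_intersecting:
  fixes Us :: "nat \<Rightarrow> 'v::{finite,zero} set"
  assumes disj: "\<And>i j. i < h \<Longrightarrow> j < h \<Longrightarrow> i \<noteq> j \<Longrightarrow> Us i \<inter> Us j = {0}"
    and "\<not> P 0"
  shows "card {v. P v}
           = card {v. v \<noteq> 0 \<and> (\<forall>i<h. v \<notin> Us i) \<and> P v} + (\<Sum>i<h. card {v \<in> Us i. P v})"
proof -
  have split:
    "{v. P v} = {v. v \<noteq> 0 \<and> (\<forall>i<h. v \<notin> Us i) \<and> P v} \<union> (\<Union>i<h. {v \<in> Us i. P v})"
    using \<open>\<not> P 0\<close> by auto
  have "card (\<Union>i<h. {v \<in> Us i. P v}) = (\<Sum>i<h. card {v \<in> Us i. P v})"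
    using disj \<open>\<not> P 0\<close> by (intro card_UN_disjoint) (auto, metis IntI singletonD)
  then show ?thesis
    by (subst split, subst card_Un_disjoint) auto
qed

definition vec_dot :: "'a::field ^ 'n \<Rightarrow> 'a ^ 'n \<Rightarrow> 'a" where
  "vec_dot x v = (\<Sum>i\<in>UNIV. x $ i * v $ i)"

lemma linear_vec_dot: "Vector_Spaces.linear (*s) (*) (vec_dot x)"
  unfolding Vector_Spaces.linear_iff vec_dot_def
  by (simp add: vec.vector_space_axioms vector_space_over_itself.vector_space_axioms
      distrib_left sum.distrib sum_distrib_left mult.left_commute)

lemma vec_dot_diff_left: "vec_dot (x - y) v = vec_dot x v - vec_dot y v"
  unfolding vec_dot_def by (simp add: left_diff_distrib sum_subtractf)

lemma vec_dot_axis: "vec_dot x (axis i 1) = x $ i"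
  unfolding vec_dot_def axis_def by (simp add: if_distrib cong: if_cong)

lemma vec_dot_nonvanishing: "x \<noteq> 0 \<Longrightarrow> \<exists>v. vec_dot x v \<noteq> 0"
  by (metis vec_dot_axis vec_eq_iff zero_index)

definition codeword :: "(nat \<Rightarrow> 'a::field ^ 'n) \<Rightarrow> nat \<Rightarrow> 'a ^ 'n \<Rightarrow> 'a list" where
  "codeword G N x = map (\<lambda>j. vec_dot x (G j)) [0..<N]"

lemma gen_code_eq_range_codeword: "gen_code G N = range (codeword G N)"
  unfolding gen_code_def codeword_def vec_dot_def ..

lemma length_codeword [simp]: "length (codeword G N x) = N"
  by (simp add: codeword_def)

lemma codeword_zero [simp]: "codeword G N 0 = replicate N 0"
  by (simp add: codeword_def vec_dot_def map_replicate_const)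

lemma hwt_codeword: "hwt (codeword G N x) = card {j. j < N \<and> vec_dot x (G j) \<noteq> 0}"
  unfolding hwt_def codeword_def
  by (simp add: length_filter_conv_card, rule arg_cong[where f = card]) auto

lemma hwt_replicate_zero [simp]: "hwt (replicate n 0) = 0"
  by (simp add: hwt_def)

lemma inj_codeword:
  assumes "\<And>x. x \<noteq> 0 \<Longrightarrow> codeword G N x \<noteq> replicate N 0"
  shows "inj (codeword G N)"
proof (rule injI)
  fix x y assume "codeword G N x = codeword G N y"
  then have "\<forall>j<N. vec_dot x (G j) = vec_dot y (G j)"
    by (simp add: codeword_def map_eq_conv)
  then have "map (\<lambda>j. vec_dot (x - y) (G j)) [0..<N] = map (\<lambda>_. 0) [0..<N]"
    by (simp add: vec_dot_diff_left)
  then have "codeword G N (x - y) = replicate N 0"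
    by (simp add: codeword_def map_replicate_const)
  then show "x = y" using assms[of "x - y"] by auto
qed

lemma card_complement_of_subspaces:
  fixes Us :: "nat \<Rightarrow> ('a::{field,finite} ^ 'n) set"
  assumes subsp: "\<And>i. i < h \<Longrightarrow> vec.subspace (Us i) \<and> vec.dim (Us i) = u"
    and disj: "\<And>i j. i < h \<Longrightarrow> j < h \<Longrightarrow> i \<noteq> j \<Longrightarrow> Us i \<inter> Us j = {0}"
  shows "card {v. v \<noteq> 0 \<and> (\<forall>i<h. v \<notin> Us i)} + h * (CARD('a) ^ u - 1) = CARD('a) ^ CARD('n) - 1"
proof -
  have "card {v \<in> Us i. v \<noteq> 0} = CARD('a) ^ u - 1" if "i < h" for i
  proof -
    have "{v \<in> Us i. v \<noteq> 0} = Us i - {0}" by blast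
    then show ?thesis
      using subsp[OF that] card_subspace[of "Us i"] vec.subspace_0[of "Us i"]
      by (simp add: card_Diff_singleton)
  qed
  moreover have "{v :: 'a ^ 'n. v \<noteq> 0} = UNIV - {0}" by blast
  then have "card {v :: 'a ^ 'n. v \<noteq> 0} = CARD('a) ^ CARD('n) - 1"
    by (simp add: card_Diff_singleton)
  ultimately show ?thesis
    using card_split_off_trivially_intersecting[where Us = Us and h = h and P = "\<lambda>v. v \<noteq> 0"] disj
    by (simp cong: conj_cong)
qed

lemma scale_mem_complement_of_subspaces:
  fixes Us :: "nat \<Rightarrow> ('a::field ^ 'n) set"
  assumes "\<And>i. i < h \<Longrightarrow> vec.subspace (Us i)" and "a \<noteq> 0"
    and "v \<noteq> 0 \<and> (\<forall>i<h. v \<notin> Us i)"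
  shows "a *s v \<noteq> 0 \<and> (\<forall>i<h. a *s v \<notin> Us i)"
proof -
  have "v \<in> Us i" if "i < h" "a *s v \<in> Us i" for i
  proof -
    have "inverse a *s (a *s v) \<in> Us i"
      using vec.subspace_scale assms(1) that by blast
    then show ?thesis using \<open>a \<noteq> 0\<close> by simp
  qed
  then show ?thesis using assms(2,3) by auto
qed

lemma hwt_codeword_complement_of_subspaces:
  fixes Us :: "nat \<Rightarrow> ('a::{field,finite} ^ 'n) set" and G :: "nat \<Rightarrow> 'a ^ 'n"
  assumes subsp: "\<And>i. i < h \<Longrightarrow> vec.subspace (Us i) \<and> vec.dim (Us i) = u"
    and disj: "\<And>i j. i < h \<Longrightarrow> j < h \<Longrightarrow> i \<noteq> j \<Longrightarrow> Us i \<inter> Us j = {0}"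
    and cols_in: "\<And>j. j < N \<Longrightarrow> G j \<noteq> 0 \<and> (\<forall>i<h. G j \<notin> Us i)"
    and cols_rep: "\<And>v. v \<noteq> 0 \<Longrightarrow> (\<forall>i<h. v \<notin> Us i) \<Longrightarrow>
                     (\<exists>!j. j < N \<and> (\<exists>l::'a. l \<noteq> 0 \<and> G j = l *s v))"
    and "x \<noteq> 0"
  shows "hwt (codeword G N x) + card {i. i < h \<and> (\<exists>v\<in>Us i. vec_dot x v \<noteq> 0)} * CARD('a) ^ (u - 1)
           = CARD('a) ^ (CARD('n) - 1)"
proof -
  let ?q = "CARD('a)" and ?f = "vec_dot x"
  define U where "U = {v :: 'a ^ 'n. v \<noteq> 0 \<and> (\<forall>i<h. v \<notin> Us i)}"
  define I where "I = {i. i < h \<and> (\<exists>v\<in>Us i. ?f v \<noteq> 0)}"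
  have f: "Vector_Spaces.linear (*s) (*) ?f"
    by (rule linear_vec_dot)
  interpret f: Vector_Spaces.linear "(*s)" "(*)" ?f by (fact f)
  have "a *s v \<in> U" if "a \<noteq> 0" "v \<in> U" for a v
    using scale_mem_complement_of_subspaces[of h Us a v] subsp that unfolding U_def by blast
  then have "card {v \<in> U. ?f v \<noteq> 0} = (?q - 1) * hwt (codeword G N x)"
    unfolding hwt_codeword
    by (intro card_filter_projective_representatives) (auto simp: U_def cols_in cols_rep f.scale)
  moreover have "card {v. ?f v \<noteq> 0} = (?q - 1) * ?q ^ (CARD('n) - 1)"
    using card_nonvanishing_linear_functional[OF f vec.subspace_UNIV]
      vec_dot_nonvanishing[OF \<open>x \<noteq> 0\<close>]
    by (simp add: card_cart_basis)
  moreover have "(\<Sum>i<h. card {v \<in> Us i. ?f v \<noteq> 0}) = card I * ((?q - 1) * ?q ^ (u - 1))"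
  proof -
    have "(\<Sum>i<h. card {v \<in> Us i. ?f v \<noteq> 0}) = (\<Sum>i\<in>I. (?q - 1) * ?q ^ (u - 1))"
    proof (rule sum.mono_neutral_cong_right)
      show "card {v \<in> Us i. ?f v \<noteq> 0} = (?q - 1) * ?q ^ (u - 1)" if "i \<in> I" for i
        using that subsp card_nonvanishing_linear_functional[OF f] unfolding I_def by auto
    qed (auto simp: I_def)
    then show ?thesis by simp
  qed
  moreover have "card {v. ?f v \<noteq> 0} = card {v \<in> U. ?f v \<noteq> 0} + (\<Sum>i<h. card {v \<in> Us i. ?f v \<noteq> 0})"
    using card_split_off_trivially_intersecting[where Us = Us and h = h and P = "\<lambda>v. ?f v \<noteq> 0"] disj
    by (simp add: U_def)
  ultimately have "(?q - 1) * ?q ^ (CARD('n) - 1)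
      = (?q - 1) * (hwt (codeword G N x) + card I * ?q ^ (u - 1))"
    by (simp add: algebra_simps)
  then show ?thesis
    using two_le_card_field[where 'a='a] unfolding I_def by simp
qed

lemma int_div_of_count_identity:
  fixes c h q k u :: nat
  assumes "c + h * (q ^ u - 1) = q ^ k - 1" and "q \<ge> 1"
  shows "int (c div (q - 1)) = ((int q ^ k - 1) - int h * (int q ^ u - 1)) div (int q - 1)"
proof -
  have "int c = int (q ^ k - 1) - int h * int (q ^ u - 1)"
    using assms(1) by (simp only: eq_diff_eq flip: of_nat_mult of_nat_add)
  also have "\<dots> = (int q ^ k - 1) - int h * (int q ^ u - 1)"
    using assms(2) by (simp add: of_nat_diff)
  finally show ?thesis
    using assms(2) by (simp add: zdiv_int of_nat_diff)
qed

lemma int_ge_of_add_mult_eq: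
  fixes w m h A B :: nat
  assumes "w + m * B = A" and "m \<le> h"
  shows "int w \<ge> int A - int h * int B"
proof -
  have "int w = int A - int m * int B"
    using assms(1) by (simp only: eq_diff_eq flip: of_nat_mult of_nat_add)
  moreover have "int m * int B \<le> int h * int B"
    using assms(2) by (intro mult_right_mono) auto
  ultimately show ?thesis by simp
qed

lemma card_le_of_add_mult_eq:
  fixes W :: "nat set"
  assumes "\<And>w. w \<in> W \<Longrightarrow> \<exists>m\<le>h. w + m * B = A"
  shows "card W \<le> h + 1"
proof -
  have "W \<subseteq> (\<lambda>m. A - m * B) ` {..h}"
  proof
    fix w assume "w \<in> W"
    then obtain m where "m \<le> h" "w = A - m * B"
      using assms by fastforce
    then show "w \<in> (\<lambda>m. A - m * B) ` {..h}" by blast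
  qed
  then have "card W \<le> card {..h}"
    by (meson card_image_le card_mono finite_atMost finite_imageI order_trans)
  then show ?thesis by simp
qed

lemma pos_of_add_mult_pow_eq:
  fixes q k u h m w :: nat
  assumes hyp: "int q ^ k - int q ^ (k - 1) > int h * (int q ^ u - 1)"
    and w: "w + m * q ^ (u - 1) = q ^ (k - 1)" and "m \<le> h"
    and "q \<ge> 1" "k \<ge> 1" "u \<ge> 1"
  shows "w > 0"
proof (rule ccontr)
  assume "\<not> w > 0"
  then have "q ^ (k - 1) \<le> h * q ^ (u - 1)"
    using w \<open>m \<le> h\<close> by (metis add_0 mult_le_mono1 not_gr_zero)
  then have "int q ^ (k - 1) \<le> int h * int q ^ (u - 1)"
    by (metis of_nat_le_iff of_nat_mult of_nat_power)
  then have "(int q - 1) * int q ^ (k - 1) \<le> (int q - 1) * (int h * int q ^ (u - 1))"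
    using \<open>q \<ge> 1\<close> by (intro mult_left_mono) auto
  moreover have "int q ^ k = int q * int q ^ (k - 1)" "int q ^ u = int q * int q ^ (u - 1)"
    using \<open>k \<ge> 1\<close> \<open>u \<ge> 1\<close> by (simp_all flip: power_Suc)
  moreover have "int h \<le> int h * int q ^ (u - 1)"
    using \<open>q \<ge> 1\<close> by (simp add: mult_le_cancel_left1)
  ultimately show False
    using hyp by (simp add: algebra_simps)
qed

theorem theorem2p1:
  fixes Us :: "nat \<Rightarrow> ('a::{field,finite} ^ 'n) set"
    and q k u h N :: nat
    and G :: "nat \<Rightarrow> 'a ^ 'n"
  assumes q_def: "q = CARD('a)"
    and k_def: "k = CARD('n)"
    and k3: "k \<ge> 3" and u2: "u \<ge> 2" and h1: "h \<ge> 1"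
    and subsp: "\<And>i. i < h \<Longrightarrow> vec.subspace (Us i) \<and> vec.dim (Us i) = u"
    and disj: "\<And>i j. i < h \<Longrightarrow> j < h \<Longrightarrow> i \<noteq> j \<Longrightarrow> Us i \<inter> Us j = {0}"
    and hyp: "int q ^ k - int q ^ (k - 1) > int h * (int q ^ u - 1)"
    and N_def: "N = card {v :: 'a ^ 'n. v \<noteq> 0 \<and> (\<forall>i<h. v \<notin> Us i)} div (q - 1)"
    and cols_in: "\<And>j. j < N \<Longrightarrow> G j \<noteq> 0 \<and> (\<forall>i<h. G j \<notin> Us i)"
    and cols_rep: "\<And>v. v \<noteq> 0 \<Longrightarrow> (\<forall>i<h. v \<notin> Us i) \<Longrightarrow>
                     (\<exists>!j. j < N \<and> (\<exists>l::'a. l \<noteq> 0 \<and> G j = l *s v))"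
  shows "int N = ((int q ^ k - 1) - int h * (int q ^ u - 1)) div (int q - 1)
       \<and> (\<forall>c\<in>gen_code G N. length c = N)
       \<and> card (gen_code G N) = q ^ k
       \<and> (\<forall>c\<in>gen_code G N. c \<noteq> replicate N 0 \<longrightarrow>
             int (hwt c) \<ge> int q ^ (k - 1) - int h * int q ^ (u - 1))
       \<and> card {hwt c | c. c \<in> gen_code G N \<and> c \<noteq> replicate N 0} \<le> h + 1"
proof -
  let ?A = "q ^ (k - 1)" and ?B = "q ^ (u - 1)"
  have q_ge: "q \<ge> 2"
    using two_le_card_field[where 'a='a] q_def by simp
  have weights: "\<exists>m\<le>h. hwt (codeword G N x) + m * ?B = ?A" if "x \<noteq> 0" for x
  proof -
    have "card {i. i < h \<and> (\<exists>v\<in>Us i. vec_dot x v \<noteq> 0)} \<le> card {..<h}"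
      by (rule card_mono) auto
    moreover have "hwt (codeword G N x) + card {i. i < h \<and> (\<exists>v\<in>Us i. vec_dot x v \<noteq> 0)} * ?B = ?A"
      unfolding q_def k_def
      by (rule hwt_codeword_complement_of_subspaces) (use subsp disj cols_in cols_rep that in auto)
    ultimately show ?thesis by auto
  qed
  have nonzero: "codeword G N x \<noteq> replicate N 0" if "x \<noteq> 0" for x
    using weights[OF that] pos_of_add_mult_pow_eq[OF hyp] q_ge k3 u2
    by (metis hwt_replicate_zero less_irrefl one_le_numeral order.trans)
  have word_weights: "\<exists>m\<le>h. hwt c + m * ?B = ?A" if "c \<in> gen_code G N" "c \<noteq> replicate N 0" for c
    using that weights unfolding gen_code_eq_range_codeword by (metis codeword_zero rangeE)
  have "card {v :: 'a ^ 'n. v \<noteq> 0 \<and> (\<forall>i<h. v \<notin> Us i)} + h * (q ^ u - 1) = q ^ k - 1"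
    unfolding q_def k_def by (rule card_complement_of_subspaces) (use subsp disj in auto)
  then have "int N = ((int q ^ k - 1) - int h * (int q ^ u - 1)) div (int q - 1)"
    unfolding N_def using q_ge by (intro int_div_of_count_identity) auto
  moreover have "card (gen_code G N) = q ^ k"
    using card_image[OF inj_codeword[OF nonzero]] q_def k_def
    by (simp add: gen_code_eq_range_codeword)
  moreover have "\<forall>c\<in>gen_code G N. c \<noteq> replicate N 0 \<longrightarrow>
      int (hwt c) \<ge> int q ^ (k - 1) - int h * int q ^ (u - 1)"
    using word_weights by (metis int_ge_of_add_mult_eq of_nat_power)
  moreover have "card {hwt c | c. c \<in> gen_code G N \<and> c \<noteq> replicate N 0} \<le> h + 1"
    by (rule card_le_of_add_mult_eq) (use word_weights in blast)
  moreover have "\<forall>c\<in>gen_code G N. length c = N"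
    by (simp add: gen_code_eq_range_codeword)
  ultimately show ?thesis
    by blast
qed

end
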